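(* For every $n\ge 1$, $$R_n(x,y,z,t) = \sum_{T \in \mathcal{G}_{n+1}} y^{\mathrm{unl}(T)}\, t^{\mathrm{impp}(T)}\, x^{\deg_T(1)-1}\, z^{\mathrm{lead}(T)-\deg_T(1)-1}.$$
   Context: Polynomials $Q_n(x,y,z,t)$ are defined by $Q_1=1$ and $Q_{n+1} = \left[x+nz+(y+t)\left(n+y\,\partial_y\right)\right]Q_n$, and $R_n(x,y,z,t) := Q_n(x,y+1,z,t-1)$. A Greg tree of size $m$ is a tree in which exactly $m$ vertices carry labels, bijectively from $[m]$, and every unlabelled vertex has degree at least $3$; $\mathcal{G}_m$ is the set of Greg trees of size $m$ rooted at the vertex labelled $1$. Edges $(i,j)$ are oriented from parent $i$ to child $j$; $\lambda_T$ denotes the label of a labelled vertex. For any vertex $v$, $\beta_T(v)$ is the smallest label among the labelled descendants of $v$ ($v$ itself included). An edge $(i,j)$ is improper if $i$ is labelled and $\lambda_T(i)>\beta_T(j)$, proper otherwise. A vertex is an improper parent if it has at least one improper child (equivalently it is labelled and $\beta_T(i)\ne\lambda_T(i)$). Statistics: $\mathrm{unl}(T)$ = number of unlabelled vertices; $\mathrm{impp}(T)$ = number of improper parents; $\deg_T(1)$ = degree of the root $1$. For a labelled vertex $i$ with root-to-$i$ path $L(i)=(1=a_0,\dots,a_k=i)$, its greater ancestors path is the longest suffix $(a_p,\dots,a_k)$ of $L(i)$ such that every labelled vertex $j$ on it has $\lambda_T(j)\ge\lambda_T(i)$; $i$ is a leading vertex if $\beta_T(a_p)=\lambda_T(i)$;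 $\mathrm{lead}(T)$ is the number of leading vertices. *)

theory Defs
  imports "HOL-Analysis.Analysis" "HOL-Library.Multiset"
begin

text \<open>Q n x y z t is Q_n(x,y,z,t) for n \<ge> 1; the value at n = 0 is an unused dummy.
  Recurrence: Q_{m+1} = (x + m z + (y+t)(m + y d/dy)) Q_m.\<close>
fun Q :: "nat \<Rightarrow> real \<Rightarrow> real \<Rightarrow> real \<Rightarrow> real \<Rightarrow> real" where
  "Q 0 x y z t = 0"
| "Q (Suc 0) x y z t = 1"
| "Q (Suc (Suc m)) x y z t =
     (x + real (Suc m) * z + (y + t) * real (Suc m)) * Q (Suc m) x y z t
     + (y + t) * (y * deriv (\<lambda>w. Q (Suc m) x w z t) y)"

definition R :: "nat \<Rightarrow> real \<Rightarrow> real \<Rightarrow> real \<Rightarrow> real \<Rightarrow> real" where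
  "R n x y z t = Q n x (y + 1) z (t - 1)"

text \<open>A vertex carries a label (Some a) or is unlabelled (None); its children form a
  multiset of subtrees, so a value of this type is a rooted tree up to
  label-preserving isomorphism.\<close>
datatype tree = Nd (lab: "nat option") (kids: "tree multiset")

primrec labs :: "tree \<Rightarrow> nat multiset" where
  "labs (Nd l cs) = (case l of None \<Rightarrow> {#} | Some a \<Rightarrow> {#a#}) + sum_mset (image_mset labs cs)"

primrec nodes :: "tree \<Rightarrow> tree multiset" where
  "nodes (Nd l cs) = {#Nd l cs#} + sum_mset (image_mset nodes cs)"

text \<open>For every vertex, its root-to-vertex path (list of subtrees rooted at the path vertices).\<close>
primrec pnodes :: "tree \<Rightarrow> tree list multiset" where
  "pnodes (Nd l cs) = {#[Nd l cs]#}
     + sum_mset (image_mset (\<lambda>c. image_mset (\<lambda>p. Nd l cs # p) (pnodes c)) cs)"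

definition beta :: "tree \<Rightarrow> nat" where
  "beta s = Min (set_mset (labs s))"

text \<open>Greg trees of size m rooted at the vertex labelled 1: labels are a bijection onto
  {1..m}, and every unlabelled vertex (necessarily a non-root vertex, since the root is
  labelled 1) has degree \<ge> 3, i.e. at least 2 children.\<close>
definition greg :: "nat \<Rightarrow> tree \<Rightarrow> bool" where
  "greg m T \<longleftrightarrow> lab T = Some 1 \<and> labs T = mset_set {1..m}
     \<and> (\<forall>s\<in>#nodes T. lab s = None \<longrightarrow> size (kids s) \<ge> 2)"

definition unl :: "tree \<Rightarrow> nat" where
  "unl T = size {# s \<in># nodes T. lab s = None #}"

definition impp :: "tree \<Rightarrow> nat" where
  "impp T = size {# s \<in># nodes T. lab s \<noteq> None \<and> beta s \<noteq> the (lab s) #}"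

text \<open>Degree of the root (the root has no parent).\<close>
definition deg_root :: "tree \<Rightarrow> nat" where
  "deg_root T = size (kids T)"

text \<open>For a path p = (a_0,...,a_k) ending in a labelled vertex i, the greater ancestors
  path is the longest suffix all of whose labelled vertices have label \<ge> label(i);
  i is leading iff beta of its first vertex a_p equals label(i).\<close>
definition gap_top :: "tree list \<Rightarrow> tree" where
  "gap_top p = last (takeWhile
      (\<lambda>s. case lab s of None \<Rightarrow> True | Some j \<Rightarrow> the (lab (last p)) \<le> j) (rev p))"

definition leading :: "tree list \<Rightarrow> bool" where
  "leading p \<longleftrightarrow> lab (last p) \<noteq> None \<and> beta (gap_top p) = the (lab (last p))"

definition lead :: "tree \<Rightarrow> nat" where
  "lead T = size {# p \<in># pnodes T. leading p #}"

end

theory Submission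
  imports Defs "HOL-Computational_Algebra.Polynomial"
begin

text \<open>Every Greg tree of size \<open>k + 1\<close> (\<open>k \<ge> 1\<close>) arises in exactly one way from a Greg tree
  of size \<open>k\<close> by inserting a vertex with the new largest label \<open>k + 1\<close> away from the root: as a
  leaf child of a vertex, as the new parent of a non-root vertex, as a leaf next to a non-root
  vertex below a new unlabelled parent, or as the label of an unlabelled vertex. Keeping track of
  how each insertion changes the statistics shows that the sum over Greg trees, read as a
  polynomial in \<open>y\<close>, satisfies the recursion of \<open>Q\<^sub>n(x, y + 1, z, t - 1)\<close>. The statistic
  \<open>lead\<close> becomes local through the identity \<open>lead T = 1 + (number of proper edges with labelled
  parent)\<close>, so the exponent of \<open>z\<close> counts the proper edges below the children of the root.\<close>

definition distinct_mset :: "'a multiset \<Rightarrow> bool" where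
  "distinct_mset A \<longleftrightarrow> (\<forall>a. count A a \<le> 1)"

lemma distinct_mset_empty [simp]: "distinct_mset {#}"
  by (simp add: distinct_mset_def)

lemma distinct_mset_add_mset [simp]:
  "distinct_mset (add_mset a A) \<longleftrightarrow> a \<notin># A \<and> distinct_mset A"
proof
  assume h: "distinct_mset (add_mset a A)"
  have "count A a = 0"
    using h[unfolded distinct_mset_def, rule_format, of a] by simp
  moreover have "count A x \<le> 1" for x
    using h[unfolded distinct_mset_def, rule_format, of x] by (simp split: if_splits)
  ultimately show "a \<notin># A \<and> distinct_mset A"
    by (simp add: distinct_mset_def count_eq_zero_iff)
next
  assume "a \<notin># A \<and> distinct_mset A"
  then show "distinct_mset (add_mset a A)"
    by (auto simp: distinct_mset_def count_eq_zero_iff)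
qed

lemma distinct_mset_mono: "distinct_mset B \<Longrightarrow> A \<subseteq># B \<Longrightarrow> distinct_mset A"
  unfolding distinct_mset_def by (meson order_trans mset_subset_eq_count)

lemma distinct_mset_union:
  assumes "distinct_mset A" "distinct_mset B" "set_mset A \<inter> set_mset B = {}"
  shows "distinct_mset (A + B)"
  using assms
proof (induction A)
  case (add a A)
  then show ?case
    by auto
qed simp

lemma distinct_mset_image_mset:
  "distinct_mset A \<Longrightarrow> inj_on f (set_mset A) \<Longrightarrow> distinct_mset (image_mset f A)"
proof (induction A)
  case (add a A)
  then have "f a \<notin># image_mset f A"
    by (auto simp: inj_on_def)
  with add show ?case
    by simp
qed simp

lemma distinct_mset_sum_mset:
  assumes "distinct_mset A" "\<And>a. a \<in># A \<Longrightarrow> distinct_mset (F a)"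
    and "\<And>a b. a \<in># A \<Longrightarrow> b \<in># A \<Longrightarrow> a \<noteq> b \<Longrightarrow> set_mset (F a) \<inter> set_mset (F b) = {}"
  shows "distinct_mset (\<Sum>a\<in>#A. F a)"
  using assms
proof (induction A)
  case (add a A)
  have "set_mset (F a) \<inter> set_mset (\<Sum>b\<in>#A. F b) = {}"
    using add.prems(1,3) by auto
  with add show ?case
    by (simp add: distinct_mset_union)
qed simp

lemma distinct_mset_mset_set: "distinct_mset (mset_set A)"
  by (simp add: distinct_mset_def count_mset_set')

lemma sum_mset_distinct: "distinct_mset A \<Longrightarrow> (\<Sum>a\<in>#A. f a) = (\<Sum>a\<in>set_mset A. f a)"
proof (induction A)
  case (add a A)
  then show ?case
    by (simp add: add.commute)
qed simp

lemma filter_mset_sum_mset: "filter_mset P (\<Sum>a\<in>#A. F a) = (\<Sum>a\<in>#A. filter_mset P (F a))"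
  by (induction A) simp_all

lemma sum_mset_sum_mset_image: "(\<Sum>x\<in>#(\<Sum>a\<in>#A. F a). f x) = (\<Sum>a\<in>#A. \<Sum>x\<in>#F a. f x)"
  by (induction A) simp_all

lemma sum_mset_indicator: "(\<Sum>a\<in>#A. if P a then 1 else 0) = (size (filter_mset P A) :: nat)"
  by (induction A) simp_all

lemma size_filter_mem_sum_mset:
  "(\<And>a. a \<in># A \<Longrightarrow> count (F a) b \<le> 1) \<Longrightarrow>
    size (filter_mset (\<lambda>a. b \<in># F a) A) = count (\<Sum>a\<in>#A. F a) b"
proof (induction A)
  case (add a A)
  have "(if b \<in># F a then 1 else 0) = count (F a) b"
    using add.prems[of a] by (simp add: le_Suc_eq count_eq_zero_iff)
  with add show ?case
    by auto
qed simp

lemma size_filter_mset_replace: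
  "c \<in># cs \<Longrightarrow> P c' = P c \<Longrightarrow> size (filter_mset P (add_mset c' (cs - {#c#}))) = size (filter_mset P cs)"
  by (metis filter_mset_add_mset insert_DiffM size_add_mset)

lemma sum_mset_replace:
  fixes f :: "'a \<Rightarrow> 'b::comm_monoid_add"
  assumes "c \<in># cs"
  shows "(\<Sum>d\<in>#add_mset c' (cs - {#c#}). f d) + f c = (\<Sum>d\<in>#cs. f d) + f c'"
proof -
  from assms have "(\<Sum>d\<in>#cs. f d) = f c + (\<Sum>d\<in>#cs - {#c#}. f d)"
    by (metis image_mset_add_mset insert_DiffM sum_mset.add_mset)
  then show ?thesis
    by (simp add: ac_simps)
qed

lemma smult_sum_mset: "smult a (\<Sum>x\<in>#A. f x) = (\<Sum>x\<in>#A. smult a (f x))"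
  by (induction A) (simp_all add: smult_add_right)

lemma pderiv_sum: "pderiv (\<Sum>a\<in>A. f a) = (\<Sum>a\<in>A. pderiv (f a))"
  by (induction A rule: infinite_finite_induct) (simp_all add: pderiv_add)

lemma pderiv_prod_mset:
  "pderiv (\<Prod>x\<in>#A. f x) = (\<Sum>x\<in>#A. (\<Prod>y\<in>#A - {#x#}. f y) * pderiv (f x))"
proof (induction A)
  case (add a A)
  have "(\<Sum>x\<in>#A. (\<Prod>y\<in>#add_mset a A - {#x#}. f y) * pderiv (f x))
      = (\<Sum>x\<in>#A. f a * ((\<Prod>y\<in>#A - {#x#}. f y) * pderiv (f x)))"
  proof (rule arg_cong[where f = sum_mset], rule image_mset_cong)
    fix x
    assume "x \<in># A"
    then have "add_mset a A - {#x#} = add_mset a (A - {#x#})"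
      by (simp add: diff_union_swap2)
    then show "(\<Prod>y\<in>#add_mset a A - {#x#}. f y) * pderiv (f x)
        = f a * ((\<Prod>y\<in>#A - {#x#}. f y) * pderiv (f x))"
      by (simp add: mult_ac)
  qed
  with add show ?case
    by (simp add: pderiv_mult sum_mset_distrib_left mult_ac add_ac)
qed simp

lemma sum_replace_one_prod_mset:
  fixes w :: "'a \<Rightarrow> real poly"
  assumes "\<And>c. c \<in># cs \<Longrightarrow> (\<Sum>c'\<in>#F c. w c') = w c * A c + smult t (pderiv (w c))"
  shows "(\<Sum>c\<in>#cs. \<Sum>c'\<in>#F c. \<Prod>d\<in>#add_mset c' (cs - {#c#}). w d)
    = (\<Prod>d\<in>#cs. w d) * (\<Sum>c\<in>#cs. A c) + smult t (pderiv (\<Prod>d\<in>#cs. w d))"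
proof -
  have "(\<Sum>c'\<in>#F c. \<Prod>d\<in>#add_mset c' (cs - {#c#}). w d)
      = (\<Prod>d\<in>#cs. w d) * A c + smult t ((\<Prod>d\<in>#cs - {#c#}. w d) * pderiv (w c))"
    if c: "c \<in># cs" for c
  proof -
    have "(\<Sum>c'\<in>#F c. \<Prod>d\<in>#add_mset c' (cs - {#c#}). w d)
        = (\<Sum>c'\<in>#F c. w c') * (\<Prod>d\<in>#cs - {#c#}. w d)"
      by (simp add: sum_mset_distrib_right)
    also have "\<dots> = (w c * (\<Prod>d\<in>#cs - {#c#}. w d)) * A c
        + smult t ((\<Prod>d\<in>#cs - {#c#}. w d) * pderiv (w c))"
      using assms[OF c] by (simp add: algebra_simps)
    also have "w c * (\<Prod>d\<in>#cs - {#c#}. w d) = (\<Prod>d\<in>#cs. w d)"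
      using c by (metis image_mset_add_mset insert_DiffM prod_mset.add_mset)
    finally show ?thesis .
  qed
  then have "(\<Sum>c\<in>#cs. \<Sum>c'\<in>#F c. \<Prod>d\<in>#add_mset c' (cs - {#c#}). w d)
      = (\<Sum>c\<in>#cs. (\<Prod>d\<in>#cs. w d) * A c + smult t ((\<Prod>d\<in>#cs - {#c#}. w d) * pderiv (w c)))"
    by (intro arg_cong[where f = sum_mset] image_mset_cong)
  also have "\<dots> = (\<Prod>d\<in>#cs. w d) * (\<Sum>c\<in>#cs. A c) + smult t (pderiv (\<Prod>d\<in>#cs. w d))"
    by (simp add: pderiv_prod_mset sum_mset.distrib sum_mset_distrib_left smult_sum_mset)
  finally show ?thesis .
qed

lemma pderiv_monom_quadratic:
  fixes c t :: real
  shows "[:t, 1 + t, 1:] * pderiv (monom c u)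
    = smult t (pderiv (monom c u)) + monom c u * [:of_nat u * (1 + t), of_nat u:]"
proof (rule poly_ext)
  fix y :: real
  show "poly ([:t, 1 + t, 1:] * pderiv (monom c u)) y
      = poly (smult t (pderiv (monom c u)) + monom c u * [:of_nat u * (1 + t), of_nat u:]) y"
    by (cases u) (simp_all add: pderiv_monom poly_monom algebra_simps)
qed

abbreviation leaf :: "nat \<Rightarrow> tree" where
  "leaf a \<equiv> Nd (Some a) {#}"

lemma labs_kid_subseteq: "c \<in># cs \<Longrightarrow> labs c \<subseteq># labs (Nd l cs)"
proof -
  assume "c \<in># cs"
  then have "labs c \<subseteq># (\<Sum>d\<in>#cs. labs d)"
    by (metis image_mset_add_mset insert_DiffM mset_subset_eq_add_left sum_mset.insert)
  then show ?thesis
    by (simp add: subset_mset.add_increasing)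
qed

lemma beta_in_labs: "labs s \<noteq> {#} \<Longrightarrow> beta s \<in># labs s"
  unfolding beta_def by simp

lemma beta_le: "a \<in># labs s \<Longrightarrow> beta s \<le> a"
  unfolding beta_def by simp

lemma beta_mono: "labs s \<subseteq># labs g \<Longrightarrow> labs s \<noteq> {#} \<Longrightarrow> beta g \<le> beta s"
  by (meson beta_in_labs beta_le mset_subset_eqD)

lemma beta_leaf [simp]: "beta (leaf a) = a"
  by (simp add: beta_def)

lemma beta_Nd_Some_le: "beta (Nd (Some a) cs) \<le> a"
  by (simp add: beta_le)

lemma beta_add_mset_greater:
  assumes "labs s' = add_mset M (labs s)" "labs s \<noteq> {#}" "\<forall>a\<in>#labs s. a < M"
  shows "beta s' = beta s"
proof -
  have "beta s < M"
    using beta_in_labs[OF assms(2)] assms(3) by blast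
  moreover have "beta s' = min M (beta s)"
    unfolding beta_def assms(1) using assms(2) by simp
  ultimately show ?thesis
    by simp
qed

definition branching :: "tree \<Rightarrow> bool" where
  "branching s \<longleftrightarrow> (\<forall>v\<in>#nodes s. lab v = None \<longrightarrow> 2 \<le> size (kids v))"

lemma branching_Nd [simp]:
  "branching (Nd l cs) \<longleftrightarrow> (l = None \<longrightarrow> 2 \<le> size cs) \<and> (\<forall>c\<in>#cs. branching c)"
  unfolding branching_def by auto

lemma labs_nonempty: "branching s \<Longrightarrow> labs s \<noteq> {#}"
proof (induction s)
  case (Nd l cs)
  show ?case
  proof (cases l)
    case None
    with Nd.prems obtain c where "c \<in># cs" "branching c"
      by (metis branching_Nd multiset_nonemptyE not_numeral_le_zero size_empty)
    with Nd.IH show ?thesis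
      using labs_kid_subseteq[of c cs l] by (metis subset_mset.bot_unique)
  qed simp
qed

lemma size_nodes_kid: "c \<in># cs \<Longrightarrow> size (nodes c) < size (nodes (Nd l cs))"
proof -
  assume "c \<in># cs"
  then have "nodes c \<subseteq># (\<Sum>d\<in>#cs. nodes d)"
    by (metis insert_DiffM mset_subset_eq_add_left sum_mset.insert image_mset_add_mset)
  then show ?thesis
    using size_mset_mono by fastforce
qed

lemma not_own_kid: "Nd l cs \<notin># cs"
  using size_nodes_kid[of "Nd l cs" cs l] by auto

lemma distinct_kids:
  assumes "branching (Nd l cs)" "distinct_mset (labs (Nd l cs))"
  shows "distinct_mset cs"
  unfolding distinct_mset_def
proof
  fix c
  show "count cs c \<le> 1"
  proof (rule ccontr)
    assume "\<not> count cs c \<le> 1"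
    then have "{#c, c#} \<subseteq># cs"
      by (simp add: subseteq_mset_def)
    then obtain r where "cs = {#c, c#} + r"
      by (metis subset_mset.le_iff_add)
    then have "labs c + labs c \<subseteq># labs (Nd l cs)"
      by (cases l) (auto simp: subset_mset.add_increasing2)
    then have "distinct_mset (labs c + labs c)"
      using assms(2) distinct_mset_mono by blast
    then have twice: "count (labs c) a + count (labs c) a \<le> 1" for a
      unfolding distinct_mset_def by (metis count_union)
    have "labs c \<noteq> {#}"
      using assms(1) \<open>cs = {#c, c#} + r\<close> labs_nonempty by auto
    then obtain a where "0 < count (labs c) a"
      by (meson count_greater_zero_iff multiset_nonemptyE)
    with twice[of a] show False
      by linarith
  qed
qed

lemma greg_iff: "greg m T \<longleftrightarrow> lab T = Some 1 \<and> labs T = mset_set {1..m} \<and> branching T"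
  unfolding greg_def branching_def ..

lemma greg_NdE:
  assumes "greg m T"
  obtains cs where "T = Nd (Some 1) cs" "labs T = mset_set {1..m}" "\<forall>c\<in>#cs. branching c"
  using assms unfolding greg_iff by (cases T) auto

lemma greg_kid_labs:
  assumes "greg m T" "c \<in># kids T" "a \<in># labs c"
  shows "1 < a \<and> a \<le> m"
proof -
  obtain cs where T: "T = Nd (Some 1) cs" "labs T = mset_set {1..m}"
    using assms(1) by (rule greg_NdE)
  have "1 \<in># labs T"
    using T(1) by simp
  then have "count (labs T) 1 = 1"
    using T(2) by simp
  then have "count (\<Sum>c\<in>#cs. labs c) 1 = 0"
    using T(1) by simp
  then have "1 \<notin># labs c"
    using assms(2) T(1) by (simp only: count_eq_zero_iff) auto
  then have "a \<noteq> 1"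
    using assms(3) by auto
  moreover have "a \<in># labs T"
    using assms(2,3) T(1) labs_kid_subseteq mset_subset_eqD by (metis tree.sel(2))
  ultimately show ?thesis
    using T(2) by auto
qed

lemma size_labs_greg_kids:
  assumes "greg m T"
  shows "(\<Sum>c\<in>#kids T. size (labs c)) = m - 1"
proof -
  obtain cs where T: "T = Nd (Some 1) cs" "labs T = mset_set {1..m}"
    using assms by (rule greg_NdE)
  have "size (labs T) = m"
    using T(2) by simp
  with T(1) have "Suc (\<Sum>c\<in>#cs. size (labs c)) = m"
    by (simp add: image_mset.compositionality o_def)
  with T(1) show ?thesis
    by auto
qed

lemma beta_greg:
  assumes "greg m T"
  shows "beta T = 1"
proof -
  obtain cs where T: "T = Nd (Some 1) cs" "labs T = mset_set {1..m}"
    using assms by (rule greg_NdE)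
  have "1 \<in># labs T"
    using T(1) by simp
  then have "beta T \<le> 1" "beta T \<in># labs T"
    using beta_le beta_in_labs[of T] by force+
  with T(2) show ?thesis
    by simp
qed

lemma unl_Nd: "unl (Nd l cs) = (if l = None then 1 else 0) + (\<Sum>c\<in>#cs. unl c)"
  unfolding unl_def by (simp add: filter_mset_sum_mset image_mset.compositionality o_def)

lemma impp_Nd:
  "impp (Nd l cs) = (if l \<noteq> None \<and> beta (Nd l cs) \<noteq> the l then 1 else 0) + (\<Sum>c\<in>#cs. impp c)"
  unfolding impp_def by (simp add: filter_mset_sum_mset image_mset.compositionality o_def)

section \<open>Leading vertices\<close>

primrec proper_edges :: "tree \<Rightarrow> nat" where
  "proper_edges (Nd l cs) =
     size {#c \<in># cs. \<exists>a. l = Some a \<and> a < beta c#} + (\<Sum>c\<in>#cs. proper_edges c)"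

text \<open>For \<open>b = the (lab s)\<close> this is
  the first vertex \<open>a\<^sub>p\<close> of the greater ancestors path of \<open>s\<close>.\<close>
definition climb :: "tree list \<Rightarrow> nat \<Rightarrow> tree \<Rightarrow> tree" where
  "climb anc b s =
     last (s # takeWhile (\<lambda>g. case lab g of None \<Rightarrow> True | Some j \<Rightarrow> b \<le> j) (rev anc))"

lemma gap_top_snoc: "gap_top (anc @ [s]) = climb anc (the (lab s)) s"
  unfolding gap_top_def climb_def last_snoc by (simp split: option.split)

lemma climb_snoc:
  "climb (anc @ [g]) b s =
     (if case lab g of None \<Rightarrow> True | Some j \<Rightarrow> b \<le> j then climb anc b g else s)"
  unfolding climb_def by simp

lemma climb_in_path: "climb anc b s \<in> set (s # anc)"
  unfolding climb_def by (metis last_in_set list.distinct(1) set_ConsD set_rev set_takeWhileD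
      list.set_intros)

lemma beta_climb_le:
  assumes "\<forall>g\<in>set anc. labs s \<subseteq># labs g" "labs s \<noteq> {#}"
  shows "beta (climb anc b s) \<le> beta s"
  using climb_in_path[of anc b s] assms by (auto intro: beta_mono)

text \<open>A vertex carrying the smallest label of \<open>s\<close> in place of the root of \<open>s\<close> would be leading.\<close>
definition min_leading :: "tree list \<Rightarrow> tree \<Rightarrow> bool" where
  "min_leading anc s \<longleftrightarrow> beta (climb anc (beta s) s) = beta s"

lemma leading_snoc_iff:
  assumes "lab s = Some a" "\<forall>g\<in>set anc. labs s \<subseteq># labs g"
  shows "leading (anc @ [s]) \<longleftrightarrow> a = beta s \<and> min_leading anc s"
proof -
  have "a \<in># labs s"
    using assms(1) by (cases s) auto
  then have "beta (climb anc a s) \<le> beta s" "beta s \<le> a"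
    using beta_climb_le[OF assms(2)] beta_le by fastforce+
  then show ?thesis
    unfolding leading_def min_leading_def gap_top_snoc using assms(1) by auto
qed

lemma min_leading_kid_iff:
  assumes "c \<in># cs" "labs c \<noteq> {#}" "\<forall>g\<in>set anc. labs (Nd l cs) \<subseteq># labs g"
  shows "min_leading (anc @ [Nd l cs]) c \<longleftrightarrow>
    (\<exists>a. l = Some a \<and> a < beta c) \<or> (beta c = beta (Nd l cs) \<and> min_leading anc (Nd l cs))"
proof -
  have "beta (Nd l cs) \<le> beta c"
    using beta_mono[OF labs_kid_subseteq[OF assms(1)] assms(2)] .
  moreover have "beta (climb anc (beta c) (Nd l cs)) \<le> beta (Nd l cs)"
    using beta_climb_le assms labs_kid_subseteq by (metis subset_mset.bot_unique)
  ultimately show ?thesis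
    unfolding min_leading_def climb_snoc by (cases l) auto
qed

lemma size_kids_sharing_beta:
  assumes "branching (Nd l cs)" "distinct_mset (labs (Nd l cs))"
  shows "size {#c \<in># cs. beta c = beta (Nd l cs)#} = (if l = Some (beta (Nd l cs)) then 0 else 1)"
proof -
  let ?b = "beta (Nd l cs)"
  have kid: "branching c" "labs c \<subseteq># labs (Nd l cs)" if "c \<in># cs" for c
    using assms(1) that labs_kid_subseteq by auto
  have "beta c = ?b \<longleftrightarrow> ?b \<in># labs c" if "c \<in># cs" for c
    using beta_in_labs[OF labs_nonempty] beta_le beta_mono[OF _ labs_nonempty] kid[OF that]
    by (metis order_antisym)
  then have "size {#c \<in># cs. beta c = ?b#} = size (filter_mset (\<lambda>c. ?b \<in># labs c) cs)"
    by (metis (mono_tags, lifting) filter_mset_cong)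
  also have "\<dots> = count (\<Sum>c\<in>#cs. labs c) ?b"
    using assms(2) kid(2) by (intro size_filter_mem_sum_mset)
      (meson distinct_mset_def distinct_mset_mono)
  also have "\<dots> = (if l = Some ?b then 0 else 1)"
  proof -
    have "count (labs (Nd l cs)) ?b \<le> 1"
      using assms(2) by (simp add: distinct_mset_def)
    moreover have "?b \<in># labs (Nd l cs)"
      using beta_in_labs[OF labs_nonempty[OF assms(1)]] .
    ultimately have "count (labs (Nd l cs)) ?b = 1"
      by (metis One_nat_def Suc_leI count_greater_zero_iff le_antisym)
    then show ?thesis
      by (cases l) auto
  qed
  finally show ?thesis .
qed

text \<open>Leading vertices of a subtree \<open>s\<close> whose ancestors in the whole tree are \<open>anc\<close>.\<close>
definition lead_below :: "tree list \<Rightarrow> tree \<Rightarrow> nat" where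
  "lead_below anc s = size {#p \<in># pnodes s. leading (anc @ p)#}"

lemma lead_below_Nd:
  "lead_below anc (Nd l cs) = (if leading (anc @ [Nd l cs]) then 1 else 0)
     + (\<Sum>c\<in>#cs. lead_below (anc @ [Nd l cs]) c)"
  unfolding lead_below_def
  by (simp add: filter_mset_sum_mset filter_mset_image_mset image_mset.compositionality o_def)

text \<open>A child \<open>c\<close> of \<open>s\<close> inherits \<open>min_leading\<close> from \<open>s\<close> if it contains the smallest
  label of \<open>s\<close>, and acquires it through a proper edge from a labelled \<open>s\<close>; exactly one of
  \<open>s\<close> and its children carries the smallest label of \<open>s\<close>.\<close>
lemma lead_below_eq:
  assumes "branching s" "distinct_mset (labs s)" "\<forall>g\<in>set anc. labs s \<subseteq># labs g"
  shows "lead_below anc s = proper_edges s + (if min_leading anc s then 1 else 0)"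
  using assms
proof (induction s arbitrary: anc)
  case (Nd l cs)
  define s where "s = Nd l cs"
  let ?A = "\<lambda>c. \<exists>a. l = Some a \<and> a < beta c"
  let ?B = "\<lambda>c. beta c = beta s"
  define m where "m = (if min_leading anc s then 1 else 0 :: nat)"
  have kid: "lead_below (anc @ [s]) c
      = proper_edges c + (if ?A c then 1 else 0) + (if ?B c then 1 else 0) * m"
    if c: "c \<in># cs" for c
  proof -
    have c_labs: "labs c \<subseteq># labs s"
      using labs_kid_subseteq[OF c] by (simp add: s_def)
    have "branching c" "distinct_mset (labs c)"
      using Nd.prems(1,2) c c_labs distinct_mset_mono by (auto simp: s_def)
    moreover have "\<forall>g\<in>set (anc @ [s]). labs c \<subseteq># labs g"
      using Nd.prems(3) c_labs by (auto simp: s_def intro: subset_mset.order_trans)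
    moreover have "\<not> (?A c \<and> ?B c)"
      unfolding s_def by (metis beta_Nd_Some_le not_le)
    ultimately show ?thesis
      using Nd.IH[OF c] min_leading_kid_iff[OF c labs_nonempty Nd.prems(3)]
      by (auto simp: m_def s_def)
  qed
  have root: "(if leading (anc @ [s]) then 1 else 0) + size (filter_mset ?B cs) * m = m"
    using size_kids_sharing_beta[OF Nd.prems(1,2)] leading_snoc_iff[of s _ anc] Nd.prems(3)
    by (cases l) (auto simp: m_def s_def leading_def)
  have "lead_below anc s = (if leading (anc @ [s]) then 1 else 0)
      + (\<Sum>c\<in>#cs. proper_edges c + (if ?A c then 1 else 0) + (if ?B c then 1 else 0) * m)"
    using kid by (simp add: lead_below_Nd s_def cong: image_mset_cong)
  also have "\<dots> = (if leading (anc @ [s]) then 1 else 0) + (\<Sum>c\<in>#cs. proper_edges c)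
      + size (filter_mset ?A cs) + size (filter_mset ?B cs) * m"
    by (simp add: sum_mset.distrib sum_mset_indicator sum_mset_distrib_right[symmetric])
  also have "\<dots> = proper_edges s + m"
    using root by (simp add: s_def)
  finally show ?case
    by (simp add: m_def s_def)
qed

lemma lead_eq_Suc_proper_edges:
  assumes "branching T" "distinct_mset (labs T)"
  shows "lead T = Suc (proper_edges T)"
proof -
  have "lead T = lead_below [] T"
    unfolding lead_def lead_below_def by simp
  then show ?thesis
    using lead_below_eq[OF assms] by (simp add: min_leading_def climb_def)
qed

lemma lead_greg:
  assumes "greg m T"
  shows "lead T = Suc (size (kids T) + (\<Sum>c\<in>#kids T. proper_edges c))"
proof -
  obtain cs where T: "T = Nd (Some 1) cs" "\<forall>c\<in>#cs. branching c"
    using assms by (rule greg_NdE)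
  have "1 < beta c" if "c \<in># cs" for c
    using greg_kid_labs[OF assms] beta_in_labs labs_nonempty T that by fastforce
  then have "proper_edges T = size cs + (\<Sum>c\<in>#cs. proper_edges c)"
    by (simp add: T(1) filter_mset_True cong: filter_mset_cong)
  moreover have "lead T = Suc (proper_edges T)"
    using assms by (intro lead_eq_Suc_proper_edges) (simp_all add: greg_iff distinct_mset_mset_set)
  ultimately show ?thesis
    by (simp add: T(1))
qed

section \<open>Inserting a vertex with a new largest label\<close>

primrec ins_tree :: "nat \<Rightarrow> tree \<Rightarrow> tree multiset" where
  "ins_tree M (Nd l cs) =
     {#Nd (Some M) {#Nd l cs#}, Nd None {#Nd l cs, leaf M#}#}
     + (if l = None then {#Nd (Some M) cs#} else {#})
     + image_mset (Nd l) (add_mset (add_mset (leaf M) cs)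
         (\<Sum>c\<in>#cs. image_mset (\<lambda>c'. add_mset c' (cs - {#c#})) (ins_tree M c)))"

definition ins_forest :: "nat \<Rightarrow> tree multiset \<Rightarrow> tree multiset multiset" where
  "ins_forest M cs = add_mset (add_mset (leaf M) cs)
     (\<Sum>c\<in>#cs. image_mset (\<lambda>c'. add_mset c' (cs - {#c#})) (ins_tree M c))"

lemma ins_tree_Nd:
  "ins_tree M (Nd l cs) =
     {#Nd (Some M) {#Nd l cs#}, Nd None {#Nd l cs, leaf M#}#}
     + (if l = None then {#Nd (Some M) cs#} else {#}) + image_mset (Nd l) (ins_forest M cs)"
  unfolding ins_forest_def by simp

declare ins_tree.simps [simp del]

lemma ins_forest_cases:
  assumes "cs' \<in># ins_forest M cs"
  obtains (leaf) "cs' = add_mset (leaf M) cs"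
    | (replace) c c' where "c \<in># cs" "c' \<in># ins_tree M c" "cs' = add_mset c' (cs - {#c#})"
  using assms unfolding ins_forest_def by auto

lemma ins_tree_cases:
  assumes "s' \<in># ins_tree M (Nd l cs)"
  obtains (above) "s' = Nd (Some M) {#Nd l cs#}"
    | (beside) "s' = Nd None {#Nd l cs, leaf M#}"
    | (relabel) "l = None" "s' = Nd (Some M) cs"
    | (below) cs' where "cs' \<in># ins_forest M cs" "s' = Nd l cs'"
  using assms unfolding ins_tree_Nd by (auto split: if_splits)

lemma ins_forest_intros:
  "add_mset (leaf M) cs \<in># ins_forest M cs"
  "c \<in># cs \<Longrightarrow> c' \<in># ins_tree M c \<Longrightarrow> add_mset c' (cs - {#c#}) \<in># ins_forest M cs"
  unfolding ins_forest_def by auto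

lemma ins_tree_intros:
  "Nd (Some M) {#s#} \<in># ins_tree M s"
  "Nd None {#s, leaf M#} \<in># ins_tree M s"
  "Nd (Some M) cs \<in># ins_tree M (Nd None cs)"
  "cs' \<in># ins_forest M cs \<Longrightarrow> Nd l cs' \<in># ins_tree M (Nd l cs)"
  by (cases s; simp add: ins_tree_Nd)+

lemma size_ins_forest:
  "cs' \<in># ins_forest M cs \<Longrightarrow> size cs' = Suc (size cs) \<or> size cs' = size cs"
  by (erule ins_forest_cases) (simp_all, metis insert_DiffM size_add_mset)

lemma labs_ins_forest_if:
  assumes "\<forall>c\<in>#cs. \<forall>c'\<in>#ins_tree M c. labs c' = add_mset M (labs c)"
    and "cs' \<in># ins_forest M cs"
  shows "(\<Sum>c\<in>#cs'. labs c) = add_mset M (\<Sum>c\<in>#cs. labs c)"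
  using assms(2)
proof (cases rule: ins_forest_cases)
  case (replace c c')
  then show ?thesis
    using assms(1) sum_mset_replace[of c cs labs c'] by simp
qed simp

lemma labs_ins_tree: "s' \<in># ins_tree M s \<Longrightarrow> labs s' = add_mset M (labs s)"
proof (induction s arbitrary: s')
  case (Nd l cs)
  from Nd.prems show ?case
    by (cases rule: ins_tree_cases)
      (use labs_ins_forest_if[where cs=cs] Nd.IH in \<open>auto split: option.split\<close>)
qed

lemma labs_ins_forest:
  "cs' \<in># ins_forest M cs \<Longrightarrow> (\<Sum>c\<in>#cs'. labs c) = add_mset M (\<Sum>c\<in>#cs. labs c)"
  using labs_ins_forest_if labs_ins_tree by blast

lemma branching_ins_forest_if:
  assumes "\<forall>c\<in>#cs. branching c" "\<forall>c\<in>#cs. \<forall>c'\<in>#ins_tree M c. branching c'"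
    and "cs' \<in># ins_forest M cs"
  shows "(\<forall>c\<in>#cs'. branching c) \<and> size cs \<le> size cs'"
  using assms(3)
proof (cases rule: ins_forest_cases)
  case (replace c c')
  then have "size cs' = size cs"
    by (metis insert_DiffM size_add_mset)
  with replace assms(1,2) show ?thesis
    by (auto dest: in_diffD)
qed (use assms(1) in auto)

lemma branching_ins_tree: "branching s \<Longrightarrow> s' \<in># ins_tree M s \<Longrightarrow> branching s'"
proof (induction s arbitrary: s')
  case (Nd l cs)
  have kids: "\<forall>c\<in>#cs. branching c"
    using Nd.prems(1) by simp
  have IH: "\<forall>c\<in>#cs. \<forall>c'\<in>#ins_tree M c. branching c'"
    using Nd.IH kids by blast
  note forest = branching_ins_forest_if[OF kids IH]
  from Nd.prems(2) show ?case
  proof (cases rule: ins_tree_cases)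
    case (below cs')
    then show ?thesis
      using forest[OF below(1)] Nd.prems(1) by auto
  qed (use Nd.prems(1) kids in auto)
qed

lemma ins_tree_neq: "c' \<in># ins_tree M c \<Longrightarrow> M \<notin># labs c \<Longrightarrow> c' \<noteq> c"
  using labs_ins_tree[of c' M c] by auto

lemma distinct_ins_forest_if:
  assumes "distinct_mset cs" "\<forall>c\<in>#cs. distinct_mset (ins_tree M c)"
    and "\<forall>c\<in>#cs. \<forall>c'\<in>#ins_tree M c. c' \<noteq> c"
  shows "distinct_mset (ins_forest M cs)"
proof -
  let ?F = "\<lambda>c. image_mset (\<lambda>c'. add_mset c' (cs - {#c#})) (ins_tree M c)"
  have "distinct_mset (\<Sum>c\<in>#cs. ?F c)"
  proof (rule distinct_mset_sum_mset[OF assms(1)])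
    show "distinct_mset (?F c)" if "c \<in># cs" for c
      using assms(2) that by (intro distinct_mset_image_mset) (auto simp: inj_on_def)
    show "set_mset (?F c) \<inter> set_mset (?F d) = {}" if "c \<in># cs" "d \<in># cs" "c \<noteq> d" for c d
    proof -
      have in_c: "d \<in># add_mset c' (cs - {#c#})" for c'
        using that by (simp add: in_diff_count)
      have notin_d: "d \<notin># add_mset d' (cs - {#d#})" if "d' \<in># ins_tree M d" for d'
        using assms(1,3) that \<open>d \<in># cs\<close> by (auto simp: distinct_mset_def in_diff_count not_less)
      have "X \<notin># ?F d" if "X \<in># ?F c" for X
      proof
        assume "X \<in># ?F d"
        then obtain d' where "d' \<in># ins_tree M d" "X = add_mset d' (cs - {#d#})"
          by auto
        moreover obtain c' where "X = add_mset c' (cs - {#c#})"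
          using \<open>X \<in># ?F c\<close> by auto
        ultimately show False
          using in_c notin_d by metis
      qed
      then show ?thesis
        by (meson disjoint_iff)
    qed
  qed
  moreover have "add_mset (leaf M) cs \<notin># (\<Sum>c\<in>#cs. ?F c)"
    by (auto simp: size_Diff_singleton) (metis insert_DiffM size_add_mset n_not_Suc_n)
  ultimately show ?thesis
    unfolding ins_forest_def by simp
qed

lemma beside_notin_ins_forest:
  assumes "M \<notin># labs (Nd l cs)"
  shows "{#Nd l cs, leaf M#} \<notin># ins_forest M cs"
proof
  assume "{#Nd l cs, leaf M#} \<in># ins_forest M cs"
  then show False
  proof (cases rule: ins_forest_cases)
    case leaf
    then have "cs = {#Nd l cs#}"
      by (simp add: add_mset_commute)
    then show False
      using not_own_kid[of l cs] by (metis multi_member_last)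
  next
    case (replace c c')
    then have "Nd l cs = c' \<or> Nd l cs \<in># cs"
      by (metis add_mset_commute in_diffD insert_noteq_member)
    then show False
      using labs_ins_tree[OF replace(2)] assms not_own_kid by auto
  qed
qed

lemma distinct_ins_tree:
  "branching s \<Longrightarrow> distinct_mset (labs s) \<Longrightarrow> M \<notin># labs s \<Longrightarrow> distinct_mset (ins_tree M s)"
proof (induction s)
  case (Nd l cs)
  let ?s = "Nd l cs"
  have kids: "\<forall>c\<in>#cs. branching c \<and> distinct_mset (labs c) \<and> M \<notin># labs c"
  proof
    fix c
    assume c: "c \<in># cs"
    then have "labs c \<subseteq># labs ?s"
      by (rule labs_kid_subseteq)
    then show "branching c \<and> distinct_mset (labs c) \<and> M \<notin># labs c"
      using Nd.prems c distinct_mset_mono mset_subset_eqD by auto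
  qed
  have forest: "distinct_mset (ins_forest M cs)"
    using Nd.IH kids ins_tree_neq distinct_kids[OF Nd.prems(1,2)]
    by (intro distinct_ins_forest_if) blast+
  have "{#?s#} \<noteq> cs"
    using not_own_kid[of l cs] by (metis multi_member_last)
  then show ?case
    unfolding ins_tree_Nd
    using forest beside_notin_ins_forest[OF Nd.prems(3)] Nd.prems(3)
    by (auto intro!: distinct_mset_union distinct_mset_image_mset simp: inj_on_def)
qed

section \<open>Deleting the largest label\<close>

text \<open>Removing the vertex labelled \<open>M\<close> may leave an unlabelled vertex with one child, which
  is then contracted; the result is a forest with at most one tree.\<close>
primrec del_tree :: "nat \<Rightarrow> tree \<Rightarrow> tree multiset" where
  "del_tree M (Nd l cs) = (let cs' = \<Sum>c\<in>#cs. del_tree M c in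
     if l = Some M then (if size cs' \<le> 1 then cs' else {#Nd None cs'#})
     else if l = None \<and> size cs' = 1 then cs' else {#Nd l cs'#})"

abbreviation del_forest :: "nat \<Rightarrow> tree multiset \<Rightarrow> tree multiset" where
  "del_forest M cs \<equiv> \<Sum>c\<in>#cs. del_tree M c"

lemma del_forest_id: "(\<And>c. c \<in># cs \<Longrightarrow> del_tree M c = {#c#}) \<Longrightarrow> del_forest M cs = cs"
  by (simp cong: image_mset_cong)

lemma del_tree_fresh: "branching s \<Longrightarrow> M \<notin># labs s \<Longrightarrow> del_tree M s = {#s#}"
proof (induction s)
  case (Nd l cs)
  then have "del_forest M cs = cs"
    by (intro del_forest_id) auto
  with Nd.prems show ?case
    by (auto simp: Let_def)
qed

lemma del_ins_forest_if:
  assumes "\<forall>c\<in>#cs. branching c \<and> M \<notin># labs c"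
    and "\<forall>c\<in>#cs. \<forall>c'\<in>#ins_tree M c. del_tree M c' = {#c#}"
    and "cs' \<in># ins_forest M cs"
  shows "del_forest M cs' = cs"
proof -
  have fresh: "del_forest M A = A" if "A \<subseteq># cs" for A
    using assms(1) del_tree_fresh that by (intro del_forest_id) (auto dest: mset_subset_eqD)
  from assms(3) show ?thesis
  proof (cases rule: ins_forest_cases)
    case (replace c c')
    then show ?thesis
      using assms(2) fresh[of "cs - {#c#}"] by simp
  qed (use fresh in simp)
qed

lemma del_ins_tree:
  "branching s \<Longrightarrow> M \<notin># labs s \<Longrightarrow> s' \<in># ins_tree M s \<Longrightarrow> del_tree M s' = {#s#}"
proof (induction s arbitrary: s')
  case (Nd l cs)
  have kids: "\<forall>c\<in>#cs. branching c \<and> M \<notin># labs c"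
    using Nd.prems(1,2) by auto
  have s: "del_tree M (Nd l cs) = {#Nd l cs#}"
    using del_tree_fresh Nd.prems(1,2) .
  have cs: "del_forest M cs = cs"
    using kids del_tree_fresh by (intro del_forest_id) blast
  have IH: "\<forall>c\<in>#cs. \<forall>c'\<in>#ins_tree M c. del_tree M c' = {#c#}"
    using Nd.IH kids by blast
  note forest = del_ins_forest_if[OF kids IH]
  from Nd.prems(3) show ?case
  proof (cases rule: ins_tree_cases)
    case (below cs')
    then show ?thesis
      using forest[OF below(1)] Nd.prems(1,2) by (auto simp: Let_def)
  qed (use s cs Nd.prems(1,2) in \<open>auto simp: Let_def\<close>)
qed

lemma del_ins_forest:
  "\<forall>c\<in>#cs. branching c \<and> M \<notin># labs c \<Longrightarrow> cs' \<in># ins_forest M cs \<Longrightarrow>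
    del_forest M cs' = cs"
  using del_ins_forest_if del_ins_tree by blast

lemma split_unique_label:
  assumes "count (\<Sum>c\<in>#cs. labs c) M = 1"
  obtains c0 cs1 where "cs = add_mset c0 cs1" "count (labs c0) M = 1" "\<forall>c\<in>#cs1. M \<notin># labs c"
proof -
  have "M \<in># (\<Sum>c\<in>#cs. labs c)"
    using assms by (metis count_eq_zero_iff one_neq_zero)
  then obtain c0 where c0: "c0 \<in># cs" "M \<in># labs c0"
    by auto
  let ?cs1 = "cs - {#c0#}"
  have cs: "cs = add_mset c0 ?cs1"
    using c0 by simp
  then have "count (\<Sum>c\<in>#cs. labs c) M = count (labs c0) M + count (\<Sum>c\<in>#?cs1. labs c) M"
    by (metis count_union image_mset_add_mset sum_mset.add_mset)
  moreover have "count (labs c0) M \<ge> 1"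
    using c0 by (simp add: Suc_le_eq)
  ultimately have "count (labs c0) M = 1" "count (\<Sum>c\<in>#?cs1. labs c) M = 0"
    using assms by linarith+
  with cs show thesis
    using that by (auto simp: count_eq_zero_iff)
qed

lemma ins_del_forest_if:
  assumes "\<forall>c\<in>#cs. branching c" "count (\<Sum>c\<in>#cs. labs c) M = 1"
    and "\<forall>c\<in>#cs. count (labs c) M = 1 \<longrightarrow> c \<noteq> leaf M \<longrightarrow>
      (\<exists>c0. del_tree M c = {#c0#} \<and> branching c0 \<and> M \<notin># labs c0 \<and> c \<in># ins_tree M c0)"
  shows "cs \<in># ins_forest M (del_forest M cs) \<and> (\<forall>c\<in>#del_forest M cs. branching c \<and> M \<notin># labs c)"
proof -
  obtain c0 cs1 where cs: "cs = add_mset c0 cs1" "count (labs c0) M = 1" "\<forall>c\<in>#cs1. M \<notin># labs c"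
    using split_unique_label[OF assms(2)] .
  have cs1: "\<forall>c\<in>#cs1. branching c \<and> M \<notin># labs c"
    using cs(1,3) assms(1) by auto
  then have del_cs1: "del_forest M cs1 = cs1"
    using del_tree_fresh by (intro del_forest_id) blast
  show ?thesis
  proof (cases "c0 = leaf M")
    case True
    then show ?thesis
      using cs(1) cs1 del_cs1 ins_forest_intros(1) by auto
  next
    case False
    then obtain c00 where c00: "del_tree M c0 = {#c00#}" "branching c00" "M \<notin># labs c00"
      "c0 \<in># ins_tree M c00"
      using assms(3) cs(1,2) by auto
    have "del_forest M cs = add_mset c00 cs1"
      using cs(1) c00(1) del_cs1 by simp
    moreover have "cs \<in># ins_forest M (add_mset c00 cs1)"
      using ins_forest_intros(2)[of c00 "add_mset c00 cs1" c0 M] c00(4) cs(1) by simp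
    ultimately show ?thesis
      using c00 cs1 by auto
  qed
qed

lemma ins_del_tree_at_root:
  assumes "\<forall>c\<in>#cs. branching c \<and> M \<notin># labs c" "cs \<noteq> {#}"
  shows "\<exists>s0. del_tree M (Nd (Some M) cs) = {#s0#} \<and> branching s0 \<and> M \<notin># labs s0
    \<and> Nd (Some M) cs \<in># ins_tree M s0"
proof -
  have del: "del_forest M cs = cs"
    using assms(1) del_tree_fresh by (intro del_forest_id) blast
  have "1 \<le> size cs"
    using assms(2) by (simp add: Suc_le_eq nonempty_has_size)
  then consider "size cs = 1" | "2 \<le> size cs"
    by (cases "size cs = 1") auto
  then show ?thesis
  proof cases
    case 1
    then obtain c where "cs = {#c#}"
      using size_1_singleton_mset by auto
    then show ?thesis
      using del assms(1) ins_tree_intros(1) by auto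
  next
    case 2
    then show ?thesis
      using del assms(1) ins_tree_intros(3)[of M cs] by (auto simp: Let_def)
  qed
qed

lemma ins_del_tree:
  "branching s \<Longrightarrow> count (labs s) M = 1 \<Longrightarrow> s \<noteq> leaf M \<Longrightarrow>
    \<exists>s0. del_tree M s = {#s0#} \<and> branching s0 \<and> M \<notin># labs s0 \<and> s \<in># ins_tree M s0"
proof (induction s)
  case (Nd l cs)
  have kids: "\<forall>c\<in>#cs. branching c"
    using Nd.prems(1) by simp
  show ?case
  proof (cases "l = Some M")
    case True
    then have "count (\<Sum>c\<in>#cs. labs c) M = 0"
      using Nd.prems(2) by simp
    then have "\<forall>c\<in>#cs. branching c \<and> M \<notin># labs c"
      using kids by (simp only: count_eq_zero_iff) auto
    with True Nd.prems(3) show ?thesis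
      using ins_del_tree_at_root by blast
  next
    case False
    let ?cs' = "del_forest M cs"
    have "count (\<Sum>c\<in>#cs. labs c) M = 1"
      using Nd.prems(2) False by (cases l) auto
    then have cs': "cs \<in># ins_forest M ?cs'" "\<forall>c\<in>#?cs'. branching c \<and> M \<notin># labs c"
      using ins_del_forest_if[OF kids] Nd.IH kids by blast+
    show ?thesis
    proof (cases "l = None \<and> size ?cs' = 1")
      case True
      then obtain d where d: "?cs' = {#d#}"
        by (metis One_nat_def size_1_singleton_mset)
      have "cs = {#leaf M, d#}"
        using cs'(1) size_ins_forest[OF cs'(1)] Nd.prems(1) True d
        by (cases rule: ins_forest_cases) auto
      then show ?thesis
        using True d cs'(2) ins_tree_intros(2)[of d M] by (auto simp: Let_def add_mset_commute)
    next
      case nontrivial: False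
      have "2 \<le> size ?cs'" if "l = None"
        using size_ins_forest[OF cs'(1)] Nd.prems(1) nontrivial that by auto
      then have "branching (Nd l ?cs') \<and> M \<notin># labs (Nd l ?cs')"
        using cs'(2) False by (cases l) auto
      moreover have "del_tree M (Nd l cs) = {#Nd l ?cs'#}"
        using False nontrivial by (auto simp: Let_def)
      ultimately show ?thesis
        using ins_tree_intros(4)[OF cs'(1)] by blast
    qed
  qed
qed

lemma ins_del_forest:
  assumes "\<forall>c\<in>#cs. branching c" "count (\<Sum>c\<in>#cs. labs c) M = 1"
  shows "cs \<in># ins_forest M (del_forest M cs) \<and> (\<forall>c\<in>#del_forest M cs. branching c \<and> M \<notin># labs c)"
  using ins_del_forest_if[OF assms] ins_del_tree assms(1) by blast

definition ins_root :: "nat \<Rightarrow> tree \<Rightarrow> tree multiset" where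
  "ins_root M T = image_mset (Nd (lab T)) (ins_forest M (kids T))"

definition del_root :: "nat \<Rightarrow> tree \<Rightarrow> tree" where
  "del_root M T = Nd (lab T) (del_forest M (kids T))"

lemma mset_set_Suc: "mset_set {1..Suc k} = add_mset (Suc k) (mset_set {1..k})"
proof -
  have "{1..Suc k} = insert (Suc k) {1..k}"
    by auto
  then show ?thesis
    by simp
qed

lemma greg_kids_fresh:
  assumes "greg k T"
  shows "\<forall>c\<in>#kids T. branching c \<and> Suc k \<notin># labs c"
  using assms greg_kid_labs[OF assms] by (cases T) (fastforce simp: greg_iff)

lemma greg_ins_root:
  assumes "greg k S" "T \<in># ins_root (Suc k) S"
  shows "greg (Suc k) T"
proof -
  obtain cs where S: "S = Nd (Some 1) cs" "labs S = mset_set {1..k}" "\<forall>c\<in>#cs. branching c"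
    using assms(1) by (rule greg_NdE)
  then obtain cs' where T: "T = Nd (Some 1) cs'" "cs' \<in># ins_forest (Suc k) cs"
    using assms(2) unfolding ins_root_def by auto
  have "\<forall>c\<in>#cs'. branching c"
    using branching_ins_forest_if[OF S(3) _ T(2)] S(3) branching_ins_tree by blast
  moreover have "labs T = add_mset (Suc k) (labs S)"
    using labs_ins_forest[OF T(2)] S(1) T(1) by simp
  ultimately show ?thesis
    using S(2) T(1) mset_set_Suc[of k] by (simp add: greg_iff)
qed

lemma del_ins_root:
  assumes "greg k S" "T \<in># ins_root (Suc k) S"
  shows "del_root (Suc k) T = S"
proof -
  obtain cs where S: "S = Nd (Some 1) cs"
    using assms(1) by (rule greg_NdE)
  then obtain cs' where T: "T = Nd (Some 1) cs'" "cs' \<in># ins_forest (Suc k) cs"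
    using assms(2) unfolding ins_root_def by auto
  show ?thesis
    using del_ins_forest[OF greg_kids_fresh[OF assms(1), unfolded S, simplified] T(2)] S T(1)
    unfolding del_root_def by simp
qed

lemma ins_del_root:
  assumes "greg (Suc k) T" "1 \<le> k"
  shows "greg k (del_root (Suc k) T) \<and> T \<in># ins_root (Suc k) (del_root (Suc k) T)"
proof -
  obtain cs where T: "T = Nd (Some 1) cs" "labs T = mset_set {1..Suc k}" "\<forall>c\<in>#cs. branching c"
    using assms(1) by (rule greg_NdE)
  have "count (labs T) (Suc k) = 1"
    using T(2) by simp
  then have "count (\<Sum>c\<in>#cs. labs c) (Suc k) = 1"
    using T(1) assms(2) by simp
  note del = ins_del_forest[OF T(3) this]
  have D: "del_root (Suc k) T = Nd (Some 1) (del_forest (Suc k) cs)"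
    unfolding del_root_def T(1) by simp
  have "labs T = add_mset (Suc k) (labs (del_root (Suc k) T))"
    using labs_ins_forest[OF del[THEN conjunct1]] D T(1) by simp
  then have "labs (del_root (Suc k) T) = mset_set {1..k}"
    using T(2) mset_set_Suc[of k] by simp
  then show ?thesis
    using del D T(1) unfolding greg_iff ins_root_def by simp
qed

lemma distinct_ins_root:
  assumes "greg k S"
  shows "distinct_mset (ins_root (Suc k) S)"
proof -
  obtain cs where S: "S = Nd (Some 1) cs" "labs S = mset_set {1..k}" "\<forall>c\<in>#cs. branching c"
    using assms(1) by (rule greg_NdE)
  have "distinct_mset (labs S)"
    using S(2) distinct_mset_mset_set by simp
  then have "\<forall>c\<in>#cs. distinct_mset (labs c)"
    using S(1) labs_kid_subseteq distinct_mset_mono by blast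
  moreover have "distinct_mset cs"
    using distinct_kids assms \<open>distinct_mset (labs S)\<close> unfolding greg_iff S(1) by blast
  ultimately have "distinct_mset (ins_forest (Suc k) cs)"
    using greg_kids_fresh[OF assms, unfolded S(1), simplified] distinct_ins_tree ins_tree_neq
    by (intro distinct_ins_forest_if) auto
  then show ?thesis
    unfolding ins_root_def S(1) by (intro distinct_mset_image_mset) (auto simp: inj_on_def)
qed

lemma greg_1: "{T. greg 1 T} = {leaf 1}"
proof -
  have "T = leaf 1" if "greg 1 T" for T
  proof -
    obtain cs where T: "T = Nd (Some 1) cs" "labs T = {#1#}" "\<forall>c\<in>#cs. branching c"
      using \<open>greg 1 T\<close> by (rule greg_NdE) simp
    then have "\<forall>c\<in>#cs. labs c = {#}"
      by (auto simp: sum_mset_0_iff)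
    with T show ?thesis
      using labs_nonempty by (metis multiset_nonemptyE)
  qed
  then show ?thesis
    by (auto simp: greg_iff)
qed

lemma greg_Suc:
  assumes "1 \<le> k"
  shows "{T. greg (Suc k) T} = (\<Union>S\<in>{S. greg k S}. set_mset (ins_root (Suc k) S))"
  using greg_ins_root ins_del_root[OF _ assms] by blast

lemma finite_greg: "1 \<le> k \<Longrightarrow> finite {T. greg k T}"
proof (induction k rule: dec_induct)
  case base
  then show ?case
    using greg_1 by (simp add: One_nat_def)
next
  case (step k)
  then show ?case
    using greg_Suc[OF step(1)] by simp
qed

lemma sum_greg_Suc:
  assumes "1 \<le> k"
  shows "(\<Sum>T | greg (Suc k) T. f T) = (\<Sum>S | greg k S. \<Sum>T\<in>#ins_root (Suc k) S. f T)"
proof -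
  have "(\<Sum>T | greg (Suc k) T. f T) = (\<Sum>S | greg k S. \<Sum>T\<in>set_mset (ins_root (Suc k) S). f T)"
    unfolding greg_Suc[OF assms] using finite_greg[OF assms] del_ins_root
    by (intro sum.UNION_disjoint) (simp_all, metis disjoint_iff)
  also have "\<dots> = (\<Sum>S | greg k S. \<Sum>T\<in>#ins_root (Suc k) S. f T)"
  proof (rule sum.cong[OF refl])
    fix S
    assume "S \<in> {S. greg k S}"
    then have "distinct_mset (ins_root (Suc k) S)"
      by (simp add: distinct_ins_root)
    then show "(\<Sum>T\<in>set_mset (ins_root (Suc k) S). f T) = (\<Sum>T\<in>#ins_root (Suc k) S. f T)"
      by (simp add: sum_mset_distinct)
  qed
  finally show ?thesis .
qed

section \<open>Weights\<close>

text \<open>Weights are polynomials in the variable \<open>y\<close>.\<close>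
definition weight :: "real \<Rightarrow> real \<Rightarrow> tree \<Rightarrow> real poly" where
  "weight t z s = monom (t ^ impp s * z ^ proper_edges s) (unl s)"

abbreviation forest_weight :: "real \<Rightarrow> real \<Rightarrow> tree multiset \<Rightarrow> real poly" where
  "forest_weight t z cs \<equiv> \<Prod>c\<in>#cs. weight t z c"

lemma forest_weight_eq:
  "forest_weight t z cs =
     monom (t ^ (\<Sum>c\<in>#cs. impp c) * z ^ (\<Sum>c\<in>#cs. proper_edges c)) (\<Sum>c\<in>#cs. unl c)"
  by (induction cs) (simp_all add: weight_def mult_monom power_add mult_ac)

definition root_weight :: "real \<Rightarrow> real \<Rightarrow> nat option \<Rightarrow> tree multiset \<Rightarrow> real poly" where
  "root_weight t z l cs =
     monom (t ^ (if l \<noteq> None \<and> beta (Nd l cs) \<noteq> the l then 1 else 0)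
       * z ^ size {#c \<in># cs. \<exists>a. l = Some a \<and> a < beta c#}) (if l = None then 1 else 0)"

lemma weight_Nd: "weight t z (Nd l cs) = root_weight t z l cs * forest_weight t z cs"
  unfolding forest_weight_eq root_weight_def mult_monom
  unfolding weight_def unl_Nd impp_Nd proper_edges.simps
  by (simp only: power_add mult_ac add_ac)

lemma pderiv_root_weight: "pderiv (root_weight t z l cs) = (if l = None then 1 else 0)"
  by (simp add: root_weight_def pderiv_monom monom_0 one_pCons)

lemma root_weight_replace:
  assumes "c \<in># cs" "beta c' = beta c" "beta (Nd l (add_mset c' (cs - {#c#}))) = beta (Nd l cs)"
  shows "root_weight t z l (add_mset c' (cs - {#c#})) = root_weight t z l cs"
  using assms size_filter_mset_replace[OF assms(1), of "\<lambda>d. \<exists>a. l = Some a \<and> a < beta d" c']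
  unfolding root_weight_def by simp

lemma root_weight_add_leaf:
  assumes "labs (Nd l cs) \<noteq> {#}" "\<forall>a\<in>#labs (Nd l cs). a < M"
  shows "root_weight t z l (add_mset (leaf M) cs) = root_weight t z l cs * [:if l = None then 1 else z:]"
proof -
  have "beta (Nd l (add_mset (leaf M) cs)) = beta (Nd l cs)"
    using assms by (intro beta_add_mset_greater) (auto split: option.split)
  then show ?thesis
    using assms(2) unfolding root_weight_def
    by (cases l) (auto simp: monom_0 mult_monom power_Suc)
qed

lemma weight_leaf: "weight t z (leaf M) = 1"
  by (simp add: weight_def impp_Nd unl_Nd)

lemma weight_above:
  assumes "labs s \<noteq> {#}" "\<forall>a\<in>#labs s. a < M"
  shows "weight t z (Nd (Some M) {#s#}) = smult t (weight t z s)"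
proof -
  have "beta (Nd (Some M) {#s#}) = beta s"
    using assms by (intro beta_add_mset_greater) auto
  moreover have "beta s < M"
    using assms beta_in_labs by blast
  ultimately show ?thesis
    by (simp add: weight_Nd root_weight_def monom_0 smult_monom)
qed

lemma weight_beside: "weight t z (Nd None {#s, leaf M#}) = weight t z s * [:0, 1:]"
  by (simp add: weight_Nd root_weight_def weight_leaf monom_altdef)

lemma weight_relabel:
  assumes "branching (Nd None cs)" "\<forall>a\<in>#labs (Nd None cs). a < M"
  shows "weight t z (Nd (Some M) cs) = smult t (forest_weight t z cs)"
proof -
  have ne: "labs (Nd None cs) \<noteq> {#}"
    using labs_nonempty[OF assms(1)] .
  then have "beta (Nd (Some M) cs) = beta (Nd None cs)"
    using assms(2) by (intro beta_add_mset_greater) auto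
  moreover have "beta (Nd None cs) < M"
    using assms(2) beta_in_labs[OF ne] by blast
  moreover have "\<forall>c\<in>#cs. beta c < M"
    using assms labs_nonempty beta_in_labs by auto
  then have "{#c \<in># cs. M < beta c#} = {#}"
    by auto
  ultimately show ?thesis
    by (simp add: weight_Nd root_weight_def monom_0 del: filter_mset_eq_mempty_iff)
qed

text \<open>Relative to the old weight, the insertions at a labelled vertex weigh \<open>z + t + y\<close>
  (leaf child, new labelled parent, new unlabelled parent), those at an unlabelled vertex
  \<open>1 + t + y\<close>; labelling an unlabelled vertex weighs \<open>t / y\<close> and gives the derivative term
  of \<open>weight_ins_tree\<close>.\<close>
definition ins_factor :: "real \<Rightarrow> real \<Rightarrow> nat \<Rightarrow> nat \<Rightarrow> real poly" where
  "ins_factor t z n u = [:of_nat n * (z + t) + of_nat u * (1 + t), of_nat (n + u):]"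

lemma sum_ins_factor:
  "(\<Sum>c\<in>#A. ins_factor t z (f c) (g c)) = ins_factor t z (\<Sum>c\<in>#A. f c) (\<Sum>c\<in>#A. g c)"
  by (induction A) (simp_all add: ins_factor_def algebra_simps)

lemma sum_forest_weight_replace:
  assumes "\<forall>c\<in>#cs. (\<Sum>c'\<in>#ins_tree M c. weight t z c')
      = weight t z c * ins_factor t z (size (labs c)) (unl c) + smult t (pderiv (weight t z c))"
  shows "(\<Sum>c\<in>#cs. \<Sum>c'\<in>#ins_tree M c. forest_weight t z (add_mset c' (cs - {#c#})))
    = forest_weight t z cs * ins_factor t z (\<Sum>c\<in>#cs. size (labs c)) (\<Sum>c\<in>#cs. unl c)
      + smult t (pderiv (forest_weight t z cs))"
  using assms
  by (subst sum_replace_one_prod_mset[where A = "\<lambda>c. ins_factor t z (size (labs c)) (unl c)"])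
    (simp_all add: sum_ins_factor)

lemma weight_ins_forest:
  assumes "labs (Nd l cs) \<noteq> {#}" "\<forall>a\<in>#labs (Nd l cs). a < M" "\<forall>c\<in>#cs. labs c \<noteq> {#}"
    and "\<forall>c\<in>#cs. (\<Sum>c'\<in>#ins_tree M c. weight t z c')
      = weight t z c * ins_factor t z (size (labs c)) (unl c) + smult t (pderiv (weight t z c))"
  shows "(\<Sum>cs'\<in>#ins_forest M cs. weight t z (Nd l cs'))
    = weight t z (Nd l cs) * ([:if l = None then 1 else z:]
      + ins_factor t z (\<Sum>c\<in>#cs. size (labs c)) (\<Sum>c\<in>#cs. unl c))
      + root_weight t z l cs * smult t (pderiv (forest_weight t z cs))"
proof -
  let ?r = "root_weight t z l cs"
  have "weight t z (Nd l (add_mset c' (cs - {#c#}))) = ?r * forest_weight t z (add_mset c' (cs - {#c#}))"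
    if "c \<in># cs" "c' \<in># ins_tree M c" for c c'
  proof -
    have "labs c' = add_mset M (labs c)"
      using labs_ins_tree[OF that(2)] .
    moreover have "\<forall>a\<in>#labs c. a < M"
      using assms(2) labs_kid_subseteq[OF that(1)] by (meson mset_subset_eqD)
    ultimately have "beta c' = beta c"
      using assms(3) that(1) by (intro beta_add_mset_greater) auto
    moreover have "beta (Nd l (add_mset c' (cs - {#c#}))) = beta (Nd l cs)"
      using labs_ins_forest[OF ins_forest_intros(2)[OF that]] assms(1,2)
      by (intro beta_add_mset_greater) (auto split: option.split)
    ultimately show ?thesis
      using root_weight_replace[OF that(1)] by (simp add: weight_Nd)
  qed
  then have "(\<Sum>c\<in>#cs. \<Sum>c'\<in>#ins_tree M c. weight t z (Nd l (add_mset c' (cs - {#c#}))))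
      = ?r * (\<Sum>c\<in>#cs. \<Sum>c'\<in>#ins_tree M c. forest_weight t z (add_mset c' (cs - {#c#})))"
    by (simp add: sum_mset_distrib_left cong: image_mset_cong)
  also have "\<dots> = ?r * (forest_weight t z cs
      * ins_factor t z (\<Sum>c\<in>#cs. size (labs c)) (\<Sum>c\<in>#cs. unl c)
      + smult t (pderiv (forest_weight t z cs)))"
    using sum_forest_weight_replace[OF assms(4)] by simp
  moreover have "weight t z (Nd l (add_mset (leaf M) cs)) = weight t z (Nd l cs) * [:if l = None then 1 else z:]"
    using root_weight_add_leaf[OF assms(1,2)] by (simp add: weight_Nd[of t z l] weight_leaf mult_ac)
  ultimately show ?thesis
    unfolding ins_forest_def
    by (simp add: sum_mset_sum_mset_image image_mset.compositionality o_def weight_Nd algebra_simps)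
qed

lemma weight_ins_tree:
  assumes "branching s" "\<forall>a\<in>#labs s. a < M"
  shows "(\<Sum>s'\<in>#ins_tree M s. weight t z s')
    = weight t z s * ins_factor t z (size (labs s)) (unl s) + smult t (pderiv (weight t z s))"
  using assms
proof (induction s)
  case (Nd l cs)
  let ?s = "Nd l cs" and ?r = "root_weight t z l cs" and ?F = "forest_weight t z cs"
  have kids: "\<forall>c\<in>#cs. branching c \<and> (\<forall>a\<in>#labs c. a < M)"
    using Nd.prems labs_kid_subseteq by (auto dest: mset_subset_eqD)
  have ne: "labs ?s \<noteq> {#}"
    using labs_nonempty[OF Nd.prems(1)] .
  have below: "(\<Sum>cs'\<in>#ins_forest M cs. weight t z (Nd l cs'))
    = weight t z ?s * ([:if l = None then 1 else z:]
      + ins_factor t z (\<Sum>c\<in>#cs. size (labs c)) (\<Sum>c\<in>#cs. unl c)) + ?r * smult t (pderiv ?F)"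
    using Nd.IH kids labs_nonempty by (intro weight_ins_forest[OF ne Nd.prems(2)]) auto
  have relabel: "l = None \<Longrightarrow> weight t z (Nd (Some M) cs) = smult t ?F"
    using weight_relabel Nd.prems by blast
  have "(\<Sum>s'\<in>#ins_tree M ?s. weight t z s') = smult t (weight t z ?s) + weight t z ?s * [:0, 1:]
      + (if l = None then smult t ?F else 0) + (\<Sum>cs'\<in>#ins_forest M cs. weight t z (Nd l cs'))"
    unfolding ins_tree_Nd using weight_above[OF ne Nd.prems(2)] weight_beside relabel
    by (simp add: image_mset.compositionality o_def)
  also have "\<dots> = weight t z ?s * ins_factor t z (size (labs ?s)) (unl ?s)
      + smult t (pderiv (weight t z ?s))"
  proof -
    have "pderiv (weight t z ?s) = ?r * pderiv ?F + (if l = None then ?F else 0)"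
      by (simp add: weight_Nd pderiv_mult pderiv_root_weight)
    moreover have "ins_factor t z (size (labs ?s)) (unl ?s)
        = ins_factor t z (\<Sum>c\<in>#cs. size (labs c)) (\<Sum>c\<in>#cs. unl c)
          + [:(if l = None then 1 else z) + t, 1:]"
      by (cases l) (simp_all add: unl_Nd ins_factor_def image_mset.compositionality o_def algebra_simps)
    ultimately show ?thesis
      unfolding below by (intro poly_ext) (simp add: algebra_simps)
  qed
  finally show ?case .
qed

section \<open>The generating polynomial\<close>

definition tree_weight :: "real \<Rightarrow> real \<Rightarrow> real \<Rightarrow> tree \<Rightarrow> real poly" where
  "tree_weight x t z T = smult (x ^ (size (kids T) - 1)) (forest_weight t z (kids T))"

lemma tree_weight_eq:
  "tree_weight x t z T = monom (x ^ (size (kids T) - 1)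
     * (t ^ (\<Sum>c\<in>#kids T. impp c) * z ^ (\<Sum>c\<in>#kids T. proper_edges c))) (\<Sum>c\<in>#kids T. unl c)"
  by (simp add: tree_weight_def forest_weight_eq smult_monom)

lemma sum_tree_weight_ins_root:
  assumes "greg (Suc n) S" "1 \<le> n"
  shows "(\<Sum>T\<in>#ins_root (Suc (Suc n)) S. tree_weight x t z T)
    = tree_weight x t z S * ([:x:] + ins_factor t z n (unl S)) + smult t (pderiv (tree_weight x t z S))"
proof -
  obtain cs where S: "S = Nd (Some 1) cs" "\<forall>c\<in>#cs. branching c"
    using assms(1) by (rule greg_NdE)
  let ?M = "Suc (Suc n)" and ?d = "size cs - 1"
  have n: "(\<Sum>c\<in>#cs. size (labs c)) = n"
    using size_labs_greg_kids[OF assms(1)] S(1) by simp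
  with assms(2) have "size cs = Suc ?d"
    by (cases cs) auto
  then have "x ^ size cs = x * x ^ ?d"
    by (metis power_Suc)
  then have leaf: "tree_weight x t z (Nd (Some 1) (add_mset (leaf ?M) cs)) = smult x (tree_weight x t z S)"
    unfolding tree_weight_def S(1) by (simp add: weight_leaf)
  have "\<forall>c\<in>#cs. \<forall>a\<in>#labs c. a < ?M"
    using greg_kid_labs[OF assms(1)] S(1) by fastforce
  then have "\<forall>c\<in>#cs. (\<Sum>c'\<in>#ins_tree ?M c. weight t z c')
      = weight t z c * ins_factor t z (size (labs c)) (unl c) + smult t (pderiv (weight t z c))"
    using S(2) weight_ins_tree by blast
  note replace = sum_forest_weight_replace[OF this, unfolded n]
  have "tree_weight x t z (Nd (Some 1) (add_mset c' (cs - {#c#})))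
      = smult (x ^ ?d) (forest_weight t z (add_mset c' (cs - {#c#})))" if "c \<in># cs" for c c'
    using that by (simp add: tree_weight_def size_Diff_singleton)
  then have "(\<Sum>c\<in>#cs. \<Sum>c'\<in>#ins_tree ?M c. tree_weight x t z (Nd (Some 1) (add_mset c' (cs - {#c#}))))
      = smult (x ^ ?d) (\<Sum>c\<in>#cs. \<Sum>c'\<in>#ins_tree ?M c. forest_weight t z (add_mset c' (cs - {#c#})))"
    by (simp add: smult_sum_mset cong: image_mset_cong)
  also have "\<dots> = tree_weight x t z S * ins_factor t z n (unl S) + smult t (pderiv (tree_weight x t z S))"
    unfolding replace by (simp add: tree_weight_def S(1) unl_Nd pderiv_smult smult_add_right mult.commute)
  finally show ?thesis
    using leaf
    unfolding ins_root_def S(1) ins_forest_def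
    by (simp add: sum_mset_sum_mset_image image_mset.compositionality o_def algebra_simps)
qed

text \<open>\<open>[:t, 1 + t, 1:]\<close> is \<open>(y + 1) (y + t)\<close>, the image of \<open>y (y + t)\<close> in the recursion of \<open>Q\<close>
  under \<open>y \<mapsto> y + 1\<close> and \<open>t \<mapsto> t - 1\<close>.\<close>
lemma tree_weight_step:
  assumes "greg (Suc n) S" "1 \<le> n"
  shows "(\<Sum>T\<in>#ins_root (Suc (Suc n)) S. tree_weight x t z T)
    = tree_weight x t z S * [:x + of_nat n * z + of_nat n * t, of_nat n:]
      + [:t, 1 + t, 1:] * pderiv (tree_weight x t z S)"
proof -
  have "unl S = (\<Sum>c\<in>#kids S. unl c)"
    using assms(1) by (cases S) (simp add: greg_iff unl_Nd)
  then have quadratic: "[:t, 1 + t, 1:] * pderiv (tree_weight x t z S)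
      = smult t (pderiv (tree_weight x t z S))
        + tree_weight x t z S * [:of_nat (unl S) * (1 + t), of_nat (unl S):]"
    unfolding tree_weight_eq by (simp only: pderiv_monom_quadratic)
  have factor: "ins_factor t z n (unl S)
      = [:of_nat n * z + of_nat n * t, of_nat n:] + [:of_nat (unl S) * (1 + t), of_nat (unl S):]"
    by (simp add: ins_factor_def algebra_simps)
  show ?thesis
    unfolding sum_tree_weight_ins_root[OF assms] quadratic factor
    by (intro poly_ext) (simp add: algebra_simps)
qed

definition greg_poly :: "real \<Rightarrow> real \<Rightarrow> real \<Rightarrow> nat \<Rightarrow> real poly" where
  "greg_poly x t z n = (\<Sum>T | greg (Suc n) T. tree_weight x t z T)"

lemma greg_poly_1: "greg_poly x t z 1 = 1"
proof -
  have "{T. greg 2 T} = set_mset (ins_root 2 (leaf 1))"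
    using greg_Suc[of 1] greg_1 by (simp add: numeral_2_eq_2)
  also have "ins_root 2 (leaf 1) = {#Nd (Some 1) {#leaf 2#}#}"
    by (simp add: ins_root_def ins_forest_def)
  finally show ?thesis
    by (simp add: greg_poly_def tree_weight_def weight_leaf numeral_2_eq_2)
qed

lemma greg_poly_Suc:
  assumes "1 \<le> n"
  shows "greg_poly x t z (Suc n) = greg_poly x t z n * [:x + of_nat n * z + of_nat n * t, of_nat n:]
    + [:t, 1 + t, 1:] * pderiv (greg_poly x t z n)"
proof -
  have "greg_poly x t z (Suc n) = (\<Sum>S | greg (Suc n) S. \<Sum>T\<in>#ins_root (Suc (Suc n)) S. tree_weight x t z T)"
    unfolding greg_poly_def using assms by (intro sum_greg_Suc) simp
  also have "\<dots> = (\<Sum>S | greg (Suc n) S. tree_weight x t z S * [:x + of_nat n * z + of_nat n * t, of_nat n:]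
      + [:t, 1 + t, 1:] * pderiv (tree_weight x t z S))"
    using tree_weight_step assms by (intro sum.cong) auto
  finally show ?thesis
    unfolding greg_poly_def by (simp only: sum.distrib sum_distrib_left sum_distrib_right pderiv_sum)
qed

lemma deriv_poly_shift: "deriv (\<lambda>w. poly p (w - 1)) (y + 1) = poly (pderiv p) (y :: real)"
proof -
  have "DERIV (\<lambda>w. poly p (w - 1)) (y + 1) :> poly (pderiv p) (y + 1 - 1) * 1"
    by (rule DERIV_chain2[OF poly_DERIV]) (auto intro!: derivative_eq_intros)
  then show ?thesis
    by (simp add: DERIV_imp_deriv)
qed

lemma Q_eq_greg_poly: "1 \<le> n \<Longrightarrow> Q n x (y + 1) z (t - 1) = poly (greg_poly x t z n) y"
proof (induction n arbitrary: y rule: dec_induct)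
  case base
  then show ?case
    using greg_poly_1[of x t z] by (simp add: One_nat_def)
next
  case (step n)
  then obtain m where m: "n = Suc m"
    by (cases n) auto
  have "(\<lambda>w. Q n x w z (t - 1)) = (\<lambda>w. poly (greg_poly x t z n) (w - 1))"
    using step.IH[of "_ - 1"] by simp
  then have "Q (Suc n) x (y + 1) z (t - 1)
      = (x + real n * z + (y + t) * real n) * poly (greg_poly x t z n) y
        + (y + t) * ((y + 1) * poly (pderiv (greg_poly x t z n)) y)"
    using step.IH m by (simp add: deriv_poly_shift)
  also have "\<dots> = poly (greg_poly x t z (Suc n)) y"
    unfolding greg_poly_Suc[OF step(1)] by (simp add: algebra_simps)
  finally show ?case .
qed

lemma poly_tree_weight:
  assumes "greg (Suc n) T" "1 \<le> n"
  shows "poly (tree_weight x t z T) y = y ^ unl T * t ^ impp T * x powi (int (deg_root T) - 1)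
    * z powi (int (lead T) - int (deg_root T) - 1)"
proof -
  obtain cs where T: "T = Nd (Some 1) cs"
    using assms(1) by (rule greg_NdE)
  have "1 \<le> size cs"
    using size_labs_greg_kids[OF assms(1)] assms(2) T by (cases cs) auto
  then have "x powi (int (deg_root T) - 1) = x ^ (size cs - 1)"
    by (simp add: deg_root_def T of_nat_diff flip: power_int_of_nat)
  moreover have "z powi (int (lead T) - int (deg_root T) - 1) = z ^ (\<Sum>c\<in>#cs. proper_edges c)"
    using lead_greg assms(1) by (simp add: deg_root_def T flip: power_int_of_nat)
  moreover have "unl T = (\<Sum>c\<in>#cs. unl c)" "impp T = (\<Sum>c\<in>#cs. impp c)"
    using beta_greg[OF assms(1)] by (simp_all add: T unl_Nd impp_Nd)
  ultimately show ?thesis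
    by (simp add: tree_weight_eq T poly_monom mult_ac)
qed

theorem theorem12:
  fixes n :: nat and x y z t :: real
  assumes "n \<ge> 1"
  shows "R n x y z t =
    (\<Sum>T\<in>{T. greg (n + 1) T}.
        y ^ unl T * t ^ impp T * x powi (int (deg_root T) - 1)
        * z powi (int (lead T) - int (deg_root T) - 1))"
proof -
  have "R n x y z t = poly (greg_poly x t z n) y"
    unfolding R_def using Q_eq_greg_poly[OF assms] .
  also have "\<dots> = (\<Sum>T | greg (Suc n) T. poly (tree_weight x t z T) y)"
    unfolding greg_poly_def by (simp add: poly_sum)
  also have "\<dots> = (\<Sum>T\<in>{T. greg (n + 1) T}.
        y ^ unl T * t ^ impp T * x powi (int (deg_root T) - 1)
        * z powi (int (lead T) - int (deg_root T) - 1))"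
    using poly_tree_weight assms by (intro sum.cong) auto
  finally show ?thesis .
qed

end
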